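(* Let $q$ be a prime power, let $r>0$ be an integer and $B(X)\in\mathbb{F}_{q^3}[X]$. Let $\Gamma$ be the set of roots in $\mathbb{F}_{q^3}$ of $X^{q^2}+X^q+X$ and $\Lambda$ the set of roots in $\mathbb{F}_{q^3}$ of $X^{q+1}+X+1$. Then the following are equivalent: (1) $X^rB(X^{q-1})$ permutes $\Gamma$; (2) $\gcd(r,q-1)=1$ and $X^rB(X)^{q-1}$ permutes $\Lambda$; (3) $\gcd(r,q-1)=1$, $B(X)$ has no roots in $\Lambda$, and the rational function $X^rB^{(q)}(-X^{-1}-1)/B(X)$ permutes $\Lambda$.
   Context: For a polynomial or rational function $g$ over $\overline{\mathbb{F}}_q$, $g^{(q)}$ denotes the function obtained from $g$ by raising each of its coefficients to the $q$-th power. A function "permutes" a set $T$ if it maps $T$ bijectively onto $T$. *)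

theory Defs
  imports "HOL-Computational_Algebra.Polynomial"
begin

definition prime_power :: "nat \<Rightarrow> bool" where
  "prime_power q \<longleftrightarrow> (\<exists>p k. prime p \<and> k > 0 \<and> q = p ^ k)"

definition frob_coeffs :: "nat \<Rightarrow> 'a::comm_semiring_1 poly \<Rightarrow> 'a poly" where
  "frob_coeffs q g = map_poly (\<lambda>c. c ^ q) g"

definition Gamma_set :: "nat \<Rightarrow> 'a::comm_ring_1 set" where
  "Gamma_set q = {x. x ^ (q^2) + x ^ q + x = 0}"

definition Lambda_set :: "nat \<Rightarrow> 'a::comm_ring_1 set" where
  "Lambda_set q = {x. x ^ (q+1) + x + 1 = 0}"

end

theory Submission
  imports Defs "HOL-Number_Theory.Residues"
begin

text \<open>
  Put \<open>f x = x ^ r * B(x ^ (q - 1))\<close> and \<open>g y = y ^ r * B(y) ^ (q - 1)\<close>, so that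
  \<open>f(x) ^ (q - 1) = g(x ^ (q - 1))\<close>. Since \<open>x ^ q\<^sup>2 + x ^ q + x = x * (y ^ (q + 1) + y + 1)\<close>
  for \<open>y = x ^ (q - 1)\<close>, the nonzero elements of \<open>\<Gamma>\<close> are exactly the \<open>(q - 1)\<close>-th roots
  of elements of \<open>\<Lambda>\<close>. Every element of \<open>\<Lambda>\<close> has such roots because it satisfies
  \<open>y ^ (q\<^sup>2 + q + 1) = 1\<close>, and \<open>\<Lambda>\<close> is nonempty because \<open>\<Gamma>\<close> is the kernel of the trace,
  which cannot be injective. The fibres of \<open>x \<mapsto> x ^ (q - 1)\<close> are cosets of the
  \<open>(q - 1)\<close>-th roots of unity, on which \<open>f\<close> acts by multiplication with \<open>r\<close>-th powers;
  so \<open>f\<close> permutes \<open>\<Gamma>\<close> iff \<open>g\<close> permutes \<open>\<Lambda>\<close> and \<open>gcd r (q - 1) = 1\<close>.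
  Finally \<open>y ^ q = - 1 / y - 1\<close> on \<open>\<Lambda>\<close>, hence \<open>B(y) ^ q = B^(q)(- 1 / y - 1)\<close>, so \<open>g\<close>
  agrees with the rational function of (3) wherever \<open>B(y) \<noteq> 0\<close>; and \<open>B\<close> has no root on
  \<open>\<Lambda>\<close> if \<open>g\<close> permutes \<open>\<Lambda>\<close>, since \<open>0 \<notin> \<Lambda>\<close>.
\<close>

lemma prime_CHAR_and_power_if_card_prime_power:
  fixes q n :: nat
  assumes "prime_power q" "card (UNIV :: 'a::{field,finite} set) = q ^ n" "n > 0"
  shows "prime CHAR('a) \<and> (\<exists>k>0. q = CHAR('a) ^ k)"
proof -
  obtain p k where p: "prime p" "k > 0" "q = p ^ k"
    using assms(1) unfolding prime_power_def by blast
  have CHAR_prime: "prime CHAR('a)"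
    by (rule prime_CHAR_semidom, rule finite_imp_CHAR_pos) simp
  have "CHAR('a) dvd p ^ (k * n)"
    using CHAR_dvd_CARD[where 'a='a] assms(2) p(3) by (simp add: power_mult)
  hence "CHAR('a) = p"
    using CHAR_prime p(1) prime_dvd_power primes_dvd_imp_eq by blast
  thus ?thesis using CHAR_prime p by blast
qed

lemma CHAR_power_gt_1:
  assumes "prime CHAR('a::semiring_1)" "q = CHAR('a) ^ k" "k > 0"
  shows "q > 1"
  using one_less_power[OF prime_gt_1_nat[OF assms(1)] assms(3)] assms(2) by simp

lemma power_CHAR_power_diff:
  fixes x y :: "'a::comm_ring_1"
  assumes "prime CHAR('a)" "q = CHAR('a) ^ k"
  shows "(x - y) ^ q = x ^ q - y ^ q"
  using freshmans_dream'[OF assms, of "x - y" y] by (simp add: eq_diff_eq)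

lemma poly_power_CHAR_power:
  fixes B :: "'a::comm_semiring_1 poly"
  assumes "prime CHAR('a)" "q = CHAR('a) ^ k"
  shows "poly B x ^ q = poly (frob_coeffs q B) (x ^ q)"
proof -
  have "q > 0"
    using assms prime_gt_0_nat by simp
  thus ?thesis
    by (induction B)
       (simp_all add: freshmans_dream'[OF assms] power_mult_distrib power_0_left
         frob_coeffs_def map_poly_pCons)
qed

lemma card_UNIV_field_ge_2: "card (UNIV :: 'a::{field,finite} set) \<ge> 2"
proof -
  have "card {0, 1 :: 'a} \<le> card (UNIV :: 'a set)"
    by (rule card_mono) simp_all
  thus ?thesis
    by simp
qed

lemma power_card_minus_1_eq_1:
  fixes x :: "'a::{field,finite}"
  assumes "x \<noteq> 0"
  shows "x ^ (card (UNIV :: 'a set) - 1) = 1"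
proof -
  let ?U = "UNIV - {0::'a}"
  have "x ^ card ?U * \<Prod>?U = (\<Prod>y\<in>?U. x * y)"
    by (simp add: prod.distrib)
  also have "\<dots> = \<Prod>?U"
    by (rule prod.reindex_bij_witness[of _ "\<lambda>y. y / x" "\<lambda>y. x * y"]) (use assms in auto)
  finally have "x ^ card ?U = 1"
    by simp
  thus ?thesis
    by (simp add: card_Diff_singleton)
qed

lemma power_card_eq_self:
  fixes x :: "'a::{field,finite}"
  shows "x ^ card (UNIV :: 'a set) = x"
  using power_card_minus_1_eq_1[of x] card_UNIV_field_ge_2[where 'a='a]
  by (cases "x = 0") (simp_all add: power_0_left power_eq_if[of x "card (UNIV :: 'a set)"])

lemma card_roots_eq_degree_if_dvd:
  fixes p a :: "'a::idom poly"
  assumes "p \<noteq> 0" "card {x. poly p x = 0} = degree p" "a dvd p"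
  shows "card {x. poly a x = 0} = degree a"
proof -
  obtain b where p: "p = a * b"
    using assms(3) by blast
  have "a \<noteq> 0" "b \<noteq> 0"
    using assms(1) p by auto
  hence "card {x. poly a x = 0} \<le> degree a" "card {x. poly b x = 0} \<le> degree b"
    and "degree p = degree a + degree b"
    using p by (simp_all add: card_poly_roots_bound degree_mult_eq)
  moreover have "degree p \<le> card {x. poly a x = 0} + card {x. poly b x = 0}"
    using assms(2) card_Un_le[of "{x. poly a x = 0}" "{x. poly b x = 0}"]
    by (simp add: p Collect_disj_eq)
  ultimately show ?thesis
    by linarith
qed

lemma degree_power_X_minus_const:
  assumes "n > 0"
  shows "degree ([:0, 1:] ^ n - [:c:] :: 'a::idom poly) = n"
proof -
  have "[:0, 1:] ^ n - [:c:] = [:0, 1:] ^ n + [:- c:]"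
    by simp
  also have "degree \<dots> = n"
    using assms by (subst degree_add_eq_left) (simp_all add: degree_linear_power[of 0, simplified])
  finally show ?thesis .
qed

lemma card_nth_roots:
  fixes b :: "'a::{field,finite}"
  assumes "d * e = card (UNIV :: 'a set) - 1" "b ^ e = 1"
  shows "card {x. x ^ d = b} = d"
proof -
  define N where "N = card (UNIV :: 'a set) - 1"
  have "N > 0"
    using card_UNIV_field_ge_2[where 'a='a] by (simp add: N_def)
  hence "d > 0"
    using assms(1) N_def by (cases d) simp_all
  define P :: "'a poly" where "P = [:0, 1:] ^ N - [:1:]"
  have degree_P: "degree P = N"
    using \<open>N > 0\<close> by (simp add: P_def degree_power_X_minus_const)
  have "{x. poly P x = 0} = UNIV - {0}"
    using power_card_minus_1_eq_1[where 'a='a] \<open>N > 0\<close>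
    by (auto simp: P_def N_def power_0_left)
  hence roots_P: "card {x. poly P x = 0} = degree P"
    by (simp add: card_Diff_singleton degree_P N_def)
  \<comment> \<open>\<open>X ^ d - b\<close> divides \<open>X ^ N - 1\<close>, which has \<open>N\<close> distinct roots.\<close>
  have "P = ([:0, 1:] ^ d) ^ e - [:b:] ^ e"
    using assms by (simp add: P_def N_def poly_const_pow flip: power_mult)
  hence "[:0, 1:] ^ d - [:b:] dvd P"
    by (metis power_diff_sumr2 dvd_triv_left)
  hence "card {x. poly ([:0, 1:] ^ d - [:b:]) x = 0} = degree ([:0, 1:] ^ d - [:b:])"
    using card_roots_eq_degree_if_dvd[OF _ roots_P] degree_P \<open>N > 0\<close> by fastforce
  moreover have "degree ([:0, 1:] ^ d - [:b:]) = d"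
    using \<open>d > 0\<close> by (rule degree_power_X_minus_const)
  ultimately show ?thesis
    by simp
qed

lemma exists_root_of_unity_neq_1:
  assumes "d dvd card (UNIV :: 'a::{field,finite} set) - 1" "d \<ge> 2"
  shows "\<exists>a::'a. a \<noteq> 1 \<and> a ^ d = 1"
proof (rule ccontr)
  assume "\<not> ?thesis"
  hence "{a::'a. a ^ d = 1} \<subseteq> {1}"
    by blast
  hence "card {a::'a. a ^ d = 1} \<le> 1"
    using card_mono[of "{1::'a}"] by simp
  moreover obtain e where e: "card (UNIV :: 'a set) - 1 = d * e"
    using assms(1) by (rule dvdE)
  moreover have "card {a::'a. a ^ d = 1} = d"
    using card_nth_roots[OF e[symmetric]] by simp
  ultimately show False
    using assms(2) by simp
qed

lemma eq_1_if_power_eq_1_coprime: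
  fixes a :: "'a::monoid_mult"
  assumes "gcd r m = 1" "a ^ r = 1" "a ^ m = 1"
  shows "a = 1"
proof (cases "r = 0")
  case True
  thus ?thesis using assms by simp
next
  case False
  then obtain u v where "r * u = m * v + 1"
    using bezout_nat[of r m] assms(1) by auto
  hence "a ^ (r * u) = a ^ (m * v) * a"
    by (simp add: power_Suc2 del: power_Suc)
  thus ?thesis
    using assms(2,3) by (simp add: power_mult)
qed

lemma bij_betw_insert_fixed_point_iff:
  assumes "f a = a" "a \<notin> S"
  shows "bij_betw f (insert a S) (insert a S) \<longleftrightarrow> bij_betw f S S"
proof
  assume bij: "bij_betw f (insert a S) (insert a S)"
  hence "a \<notin> f ` S"
    using assms by (auto simp: bij_betw_def inj_on_def)
  hence "f ` S = S"
    using bij assms by (auto simp: bij_betw_def)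
  thus "bij_betw f S S"
    using bij by (auto simp: bij_betw_def)
next
  assume "bij_betw f S S"
  thus "bij_betw f (insert a S) (insert a S)"
    using assms by (simp add: bij_betw_def)
qed

lemma gcd_eq_1_if_inj_on_power_mult:
  fixes h :: "'a::{field,finite} \<Rightarrow> 'a"
  assumes "d dvd card (UNIV :: 'a set) - 1" "x \<noteq> 0" "x ^ d \<in> T"
    and "inj_on (\<lambda>x. x ^ r * h (x ^ d)) {x. x ^ d \<in> T}"
  shows "gcd r d = 1"
proof (rule ccontr)
  assume "gcd r d \<noteq> 1"
  moreover have "gcd r d dvd card (UNIV :: 'a set) - 1"
    using assms(1) by (rule dvd_trans[OF gcd_dvd2])
  moreover have "gcd r d \<noteq> 0"
    using assms(1) card_UNIV_field_ge_2[where 'a='a] by auto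
  ultimately obtain a :: 'a where a: "a \<noteq> 1" "a ^ gcd r d = 1"
    using exists_root_of_unity_neq_1 by (metis One_nat_def less_2_cases not_less)
  have "a ^ r = 1"
    using a(2) by (metis dvd_def gcd_dvd1 power_mult power_one)
  moreover have "a ^ d = 1"
    using a(2) by (metis dvd_def gcd_dvd2 power_mult power_one)
  ultimately have "(a * x) ^ d \<in> T" "(a * x) ^ r * h ((a * x) ^ d) = x ^ r * h (x ^ d)"
    using assms(3) by (simp_all add: power_mult_distrib)
  hence "a * x = x"
    using assms(3,4) by (auto dest: inj_onD)
  thus False
    using a(1) assms(2) by simp
qed

lemma bij_betw_power_mult_comp_power_if:
  fixes h :: "'a::{field,finite} \<Rightarrow> 'a"
  assumes "gcd r d = 1" "d > 0" "0 \<notin> T" "bij_betw (\<lambda>y. y ^ r * h y ^ d) T T"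
  shows "bij_betw (\<lambda>x. x ^ r * h (x ^ d)) {x. x ^ d \<in> T} {x. x ^ d \<in> T}"
    (is "bij_betw ?f ?S ?S")
proof -
  let ?g = "\<lambda>y. y ^ r * h y ^ d"
  have nonzero: "x \<noteq> 0" if "x \<in> ?S" for x
    using assms(2,3) that by (auto simp: power_0_left)
  have f_power: "?f x ^ d = ?g (x ^ d)" for x
    by (simp add: power_mult_distrib mult.commute flip: power_mult)
  have f_S: "?f ` ?S \<subseteq> ?S"
    using assms(4) f_power by (auto simp: bij_betw_def)
  have "inj_on ?f ?S"
  proof (rule inj_onI)
    fix x y assume xy: "x \<in> ?S" "y \<in> ?S" "?f x = ?f y"
    hence "x ^ d = y ^ d"
      using assms(4) f_power by (metis (no_types, lifting) bij_betw_def inj_onD mem_Collect_eq)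
    define a where "a = y / x"
    have "y = a * x" "a ^ d = 1"
      using nonzero xy \<open>x ^ d = y ^ d\<close> by (simp_all add: a_def power_divide)
    hence "?f y = a ^ r * ?f x"
      by (simp add: power_mult_distrib)
    moreover have "?f x \<noteq> 0"
      using nonzero f_S xy(1) by blast
    ultimately have "a ^ r = 1"
      using xy(3) by (metis mult_cancel_right2)
    hence "a = 1"
      using eq_1_if_power_eq_1_coprime[OF assms(1) _ \<open>a ^ d = 1\<close>] by blast
    thus "x = y"
      using \<open>y = a * x\<close> by simp
  qed
  thus ?thesis
    using f_S by (simp add: bij_betw_def endo_inj_surj)
qed

text \<open>The criterion of Akbary, Ghioca and Wang: \<open>x \<mapsto> x ^ d\<close> maps \<open>{x. x ^ d \<in> T}\<close>
  onto \<open>T\<close>, its fibres are cosets of the \<open>d\<close>-th roots of unity, and on such a coset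
  \<open>x ^ r * h (x ^ d)\<close> acts as multiplication by \<open>r\<close>-th powers.\<close>

lemma bij_betw_power_mult_comp_power_iff:
  fixes h :: "'a::{field,finite} \<Rightarrow> 'a"
  assumes "d dvd card (UNIV :: 'a set) - 1" "0 \<notin> T" "T \<noteq> {}" "T \<subseteq> range (\<lambda>x. x ^ d)"
  shows "bij_betw (\<lambda>x. x ^ r * h (x ^ d)) {x. x ^ d \<in> T} {x. x ^ d \<in> T} \<longleftrightarrow>
         gcd r d = 1 \<and> bij_betw (\<lambda>y. y ^ r * h y ^ d) T T"
    (is "bij_betw ?f ?S ?S \<longleftrightarrow> _ \<and> bij_betw ?g T T")
proof -
  have "d > 0"
    using assms(1) card_UNIV_field_ge_2[where 'a='a] by (cases d) auto
  hence nonzero: "x \<noteq> 0" if "x \<in> ?S" for x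
    using assms(2) that by (auto simp: power_0_left)
  have T_eq: "T = (\<lambda>x. x ^ d) ` ?S"
    using assms(4) by auto
  show ?thesis
  proof
    assume bij_f: "bij_betw ?f ?S ?S"
    obtain x where "x ^ d \<in> T"
      using assms(3) T_eq by blast
    moreover have "inj_on ?f ?S"
      using bij_f by (simp add: bij_betw_def)
    ultimately have "gcd r d = 1"
      using gcd_eq_1_if_inj_on_power_mult[OF assms(1) nonzero] by simp
    moreover have "?g ` T = T"
    proof -
      have "?g ` T = (\<lambda>x. x ^ d) ` ?f ` ?S"
        by (subst T_eq) (simp add: image_image power_mult_distrib mult.commute flip: power_mult)
      also have "\<dots> = T"
        using bij_f T_eq by (simp add: bij_betw_def)
      finally show ?thesis .
    qed
    ultimately show "gcd r d = 1 \<and> bij_betw ?g T T"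
      by (simp add: bij_betw_def eq_card_imp_inj_on)
  next
    assume "gcd r d = 1 \<and> bij_betw ?g T T"
    thus "bij_betw ?f ?S ?S"
      using \<open>d > 0\<close> assms(2) by (intro bij_betw_power_mult_comp_power_if) auto
  qed
qed

lemma zero_notin_Lambda_set: "(0 :: 'a::comm_ring_1) \<notin> Lambda_set q"
  by (simp add: Lambda_set_def)

lemma Gamma_set_eq_insert_0:
  assumes "q > 0"
  shows "(Gamma_set q :: 'a::idom set) = insert 0 {x. x ^ (q - 1) \<in> Lambda_set q}"
proof -
  have "q\<^sup>2 = Suc ((q - 1) * (q + 1))" "q = Suc (q - 1)"
    using assms by (simp_all add: power2_eq_square algebra_simps)
  hence "x ^ q\<^sup>2 = x * (x ^ (q - 1)) ^ (q + 1)" "x ^ q = x * x ^ (q - 1)" for x :: 'a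
    by (metis power_Suc power_mult, metis power_Suc)
  hence "x ^ q\<^sup>2 + x ^ q + x = x * ((x ^ (q - 1)) ^ (q + 1) + x ^ (q - 1) + 1)" for x :: 'a
    by (simp add: algebra_simps)
  thus ?thesis
    by (auto simp: Gamma_set_def Lambda_set_def)
qed

lemma Lambda_set_power_q:
  fixes y :: "'a::field"
  assumes "y \<in> Lambda_set q"
  shows "y ^ q = - inverse y - 1"
proof -
  have "y \<noteq> 0"
    using assms zero_notin_Lambda_set by blast
  moreover have "y ^ q * y = - y - 1"
    using assms by (simp add: Lambda_set_def power_Suc2 eq_neg_iff_add_eq_0 algebra_simps)
  ultimately have "y ^ q = (- y - 1) / y"
    by (simp add: eq_divide_eq)
  also have "\<dots> = - inverse y - 1"
    using \<open>y \<noteq> 0\<close> by (simp add: field_simps)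
  finally show ?thesis .
qed

lemma Lambda_set_power_eq_1:
  fixes y :: "'a::field"
  assumes "prime CHAR('a)" "q = CHAR('a) ^ k" "y \<in> Lambda_set q"
  shows "y ^ (q\<^sup>2 + q + 1) = 1"
proof -
  have y: "y ^ (q + 1) = - y - 1"
    using assms(3) by (simp add: Lambda_set_def eq_neg_iff_add_eq_0 algebra_simps)
  have "q > 0"
    using assms(1,2) prime_gt_0_nat by simp
  have "q\<^sup>2 + q = (q + 1) * q"
    by (simp add: power2_eq_square)
  hence "y ^ (q\<^sup>2 + q) = (- y - 1) ^ q"
    by (simp only: power_mult y)
  also have "\<dots> = (0 - (y + 1)) ^ q"
    by simp
  also have "\<dots> = - (y ^ q) - 1"
    using \<open>q > 0\<close>
    by (simp only: power_CHAR_power_diff[OF assms(1,2)] freshmans_dream'[OF assms(1,2)])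
       (simp add: power_0_left)
  finally have "y ^ (q\<^sup>2 + q + 1) = (- (y ^ q) - 1) * y"
    by simp
  also have "\<dots> = - (y ^ (q + 1)) - y"
    by (simp add: algebra_simps)
  also have "\<dots> = 1"
    unfolding y by simp
  finally show ?thesis .
qed

lemma power3_minus_1_nat: "(q - 1) * (q\<^sup>2 + q + 1) = q ^ 3 - (1 :: nat)"
  by (cases q) (simp_all add: power2_eq_square power3_eq_cube algebra_simps)

lemma Lambda_set_subset_range_power:
  assumes "card (UNIV :: 'a::{field,finite} set) = q ^ 3"
    and "prime CHAR('a)" "q = CHAR('a) ^ k" "k > 0"
  shows "(Lambda_set q :: 'a set) \<subseteq> range (\<lambda>x. x ^ (q - 1))"
proof
  fix y :: 'a assume y: "y \<in> Lambda_set q"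
  have "q > 1"
    using CHAR_power_gt_1[OF assms(2-4)] .
  have "(q - 1) * (q\<^sup>2 + q + 1) = card (UNIV :: 'a set) - 1"
    using assms(1) power3_minus_1_nat by simp
  hence "card {x. x ^ (q - 1) = y} = q - 1"
    using card_nth_roots Lambda_set_power_eq_1[OF assms(2,3) y] by blast
  hence "{x. x ^ (q - 1) = y} \<noteq> {}"
    using \<open>q > 1\<close> by (intro notI) simp
  thus "y \<in> range (\<lambda>x. x ^ (q - 1))"
    by auto
qed

definition trace3 :: "nat \<Rightarrow> 'a::comm_ring_1 \<Rightarrow> 'a" where
  "trace3 q x = x ^ q\<^sup>2 + x ^ q + x"

lemma trace3_diff:
  fixes x y :: "'a::comm_ring_1"
  assumes "prime CHAR('a)" "q = CHAR('a) ^ k"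
  shows "trace3 q (x - y) = trace3 q x - trace3 q y"
proof -
  have "(x - y) ^ q ^ n = x ^ q ^ n - y ^ q ^ n" for n
    using power_CHAR_power_diff[OF assms(1), of "q ^ n" "k * n"] assms(2) by (simp add: power_mult)
  from this[of 1] this[of 2] show ?thesis
    by (simp add: trace3_def)
qed

lemma trace3_power_q:
  fixes x :: "'a::{field,finite}"
  assumes "card (UNIV :: 'a set) = q ^ 3" "prime CHAR('a)" "q = CHAR('a) ^ k"
  shows "trace3 q x ^ q = trace3 q x"
proof -
  have "x ^ q ^ 3 = x"
    using power_card_eq_self[of x] assms(1) by simp
  moreover have "trace3 q x ^ q = x ^ q ^ 3 + x ^ q\<^sup>2 + x ^ q"
    by (simp add: trace3_def freshmans_dream'[OF assms(2,3)] power2_eq_square power3_eq_cube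
        flip: power_mult)
  ultimately show ?thesis
    by (simp add: trace3_def algebra_simps)
qed

lemma Gamma_set_nontrivial:
  assumes "card (UNIV :: 'a::{field,finite} set) = q ^ 3"
    and "prime CHAR('a)" "q = CHAR('a) ^ k" "k > 0"
  shows "\<exists>x::'a. x \<in> Gamma_set q \<and> x \<noteq> 0"
proof -
  have "q > 1"
    using CHAR_power_gt_1[OF assms(2-4)] .
  \<comment> \<open>\<open>trace3 q\<close> is additive with values in \<open>{y. y ^ q = y}\<close>, a set of at most \<open>q\<close> elements.\<close>
  have "(q - 1) * (q\<^sup>2 + q + 1) = card (UNIV :: 'a set) - 1"
    using assms(1) power3_minus_1_nat by simp
  hence "card {y::'a. y ^ (q - 1) = 1} = q - 1"
    using card_nth_roots by (metis power_one)
  moreover have "range (trace3 q) \<subseteq> insert 0 {y::'a. y ^ (q - 1) = 1}"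
    using trace3_power_q[OF assms(1-3)] \<open>q > 1\<close> by (auto simp: power_eq_if[of _ q])
  ultimately have "card (range (trace3 q :: 'a \<Rightarrow> 'a)) \<le> q"
    using card_mono[of "insert 0 {y::'a. y ^ (q - 1) = 1}" "range (trace3 q)"] \<open>q > 1\<close>
    by (simp add: card_insert_if split: if_splits)
  moreover have "q < card (UNIV :: 'a set)"
    using power_strict_increasing[of 1 3 q] assms(1) \<open>q > 1\<close> by simp
  ultimately have "\<not> inj (trace3 q :: 'a \<Rightarrow> 'a)"
    using card_image[of "trace3 q" "UNIV :: 'a set"] by auto
  then obtain x y :: 'a where "x \<noteq> y" "trace3 q x = trace3 q y"
    by (auto simp: inj_def)
  hence "x - y \<in> Gamma_set q" "x - y \<noteq> 0"
    using trace3_diff[OF assms(2,3), of x y] by (simp_all add: Gamma_set_def trace3_def)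
  thus ?thesis
    by blast
qed

lemma bij_betw_Lambda_set_frob_coeffs_iff:
  fixes B :: "'a::field poly"
  assumes "prime CHAR('a)" "q = CHAR('a) ^ k" "k > 0"
  shows "bij_betw (\<lambda>x. x ^ r * poly B x ^ (q - 1)) (Lambda_set q) (Lambda_set q) \<longleftrightarrow>
         (\<forall>x\<in>Lambda_set q. poly B x \<noteq> 0) \<and>
         bij_betw (\<lambda>x. x ^ r * poly (frob_coeffs q B) (- inverse x - 1) / poly B x)
           (Lambda_set q) (Lambda_set q)"
    (is "bij_betw ?g ?L ?L \<longleftrightarrow> _ \<and> bij_betw ?h ?L ?L")
proof -
  have "q > 1"
    using CHAR_power_gt_1[OF assms] .
  have g_eq_h: "?g x = ?h x" if "x \<in> ?L" "poly B x \<noteq> 0" for x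
  proof -
    have "poly (frob_coeffs q B) (- inverse x - 1) = poly B x ^ q"
      using poly_power_CHAR_power[OF assms(1,2)] Lambda_set_power_q[OF that(1)] by metis
    also have "\<dots> = poly B x ^ (q - 1) * poly B x"
      using \<open>q > 1\<close> by (simp flip: power_Suc2)
    finally show ?thesis
      using that(2) by simp
  qed
  have "poly B x \<noteq> 0" if "bij_betw ?g ?L ?L" "x \<in> ?L" for x
  proof -
    have "?g x \<noteq> 0"
      using that zero_notin_Lambda_set bij_betwE by metis
    thus ?thesis
      using \<open>q > 1\<close> by auto
  qed
  thus ?thesis
    using g_eq_h bij_betw_cong[of ?L ?g ?h ?L] by blast
qed

theorem lemma3p3:
  fixes q r :: nat and B :: "'a::{field,finite} poly"
  assumes "prime_power q"
    and "card (UNIV :: 'a set) = q ^ 3"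
    and "r > 0"
  shows "(bij_betw (\<lambda>x. x ^ r * poly B (x ^ (q - 1))) (Gamma_set q) (Gamma_set q)
          \<longleftrightarrow> (gcd r (q - 1) = 1 \<and>
               bij_betw (\<lambda>x. x ^ r * (poly B x) ^ (q - 1)) (Lambda_set q) (Lambda_set q)))
       \<and> ((gcd r (q - 1) = 1 \<and>
               bij_betw (\<lambda>x. x ^ r * (poly B x) ^ (q - 1)) (Lambda_set q) (Lambda_set q))
          \<longleftrightarrow> (gcd r (q - 1) = 1 \<and> (\<forall>x\<in>Lambda_set q. poly B x \<noteq> 0) \<and>
               bij_betw (\<lambda>x. x ^ r * poly (frob_coeffs q B) (- inverse x - 1) / poly B x)
                 (Lambda_set q) (Lambda_set q)))"
proof -
  obtain k where CHAR: "prime CHAR('a)" "q = CHAR('a) ^ k" "k > 0"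
    using prime_CHAR_and_power_if_card_prime_power[OF assms(1,2)] by auto
  have "q > 1"
    using CHAR_power_gt_1[OF CHAR] .
  hence zero_notin: "(0::'a) \<notin> {x. x ^ (q - 1) \<in> Lambda_set q}"
    using zero_notin_Lambda_set by (simp add: power_0_left)
  have Gamma: "Gamma_set q = insert 0 {x::'a. x ^ (q - 1) \<in> Lambda_set q}"
    using \<open>q > 1\<close> by (intro Gamma_set_eq_insert_0) simp
  have "q - 1 dvd card (UNIV :: 'a set) - 1"
    using assms(2) power3_minus_1_nat[of q] by (metis dvd_triv_left)
  moreover have "Lambda_set q \<noteq> ({} :: 'a set)"
    using Gamma_set_nontrivial[OF assms(2) CHAR] Gamma by auto
  ultimately have
    "bij_betw (\<lambda>x. x ^ r * poly B (x ^ (q - 1))) (Gamma_set q) (Gamma_set q)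
       \<longleftrightarrow> gcd r (q - 1) = 1 \<and>
           bij_betw (\<lambda>x. x ^ r * (poly B x) ^ (q - 1)) (Lambda_set q) (Lambda_set q)"
    using bij_betw_power_mult_comp_power_iff[OF _ zero_notin_Lambda_set _
          Lambda_set_subset_range_power[OF assms(2) CHAR]]
          bij_betw_insert_fixed_point_iff[OF _ zero_notin] assms(3)
    by (simp add: Gamma power_0_left)
  thus ?thesis
    using bij_betw_Lambda_set_frob_coeffs_iff[OF CHAR] by blast
qed

end
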